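(* Let $K$ be the set of double cones of Minkowski spacetime $\mathbb M^4$ with symmetry group the Poincaré group $\mathscr P^\uparrow_+$. There exists $f\in\mathrm C^0(K,\mathcal D)^{\mathscr P^\uparrow_+}$ such that $f_a$ is nonzero and non-negative for every $a\in K$. Furthermore, the 1-cochain $\delta f$ belongs to $\mathrm C^1(K,\mathcal D)^{\mathscr P^\uparrow_+}$ and satisfies: (i) $(\delta f)^{ev}_b=f_{|b|}$ is nonzero and non-negative for every 1-simplex $b$; (ii) $(\delta f)^{odd}_b=f_{\partial_0b}-f_{\partial_1b}\neq0$ for every 1-simplex $b$ with $\partial_0b\ne\partial_1b$.
   Context: Double cones: sets $s(o_R)$ with $R>0$, $o_R=\{(t,\mathbf x)\in\mathbb R^4:|t|+|\mathbf x|<R\}$, and $s\in\mathscr P^\uparrow_+$ (proper orthochronous Poincaré group); $K$ is ordered by inclusion and $\mathscr P^\uparrow_+$ acts by $o\mapsto s(o)$. A 1-simplex is $b=(|b|;\partial_0b,\partial_1b)$ with $|b|,\partial_0b,\partial_1b\in K$, $\partial_0b,\partial_1b\subseteq|b|$; opposite $\overline b=(|b|;\partial_1b,\partial_0b)$; $s(b)=(s(|b|);s(\partial_0b),s(\partial_1b))$. $\mathcal D_a$: real smooth compactly supported functions on $\mathbb R^4$ vanishing outside the closure of $a$. $\mathrm C^0(K,\mathcal D)$: maps $a\mapsto f_a\in\mathcal D_a$; $\mathrm C^1(K,\mathcal D)$: maps $b\mapsto f_b\in\mathcal D_{|b|}$ on 1-simplices. $S$-action: $(sf)_x=f_{s(x)}\circ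 s$; $\mathrm C^n(K,\mathcal D)^{\mathscr P^\uparrow_+}$ denotes the fixed points. $(\delta f)_b:=f_{\partial_0b}-f_{\partial_1b}+f_{|b|}$ for $f\in\mathrm C^0(K,\mathcal D)$. For $g\in\mathrm C^1(K,\mathcal D)$: $g^{ev}_b=\tfrac12(g_b+g_{\overline b})$, $g^{odd}_b=\tfrac12(g_b-g_{\overline b})$. *)

theory Defs
  imports "HOL-Analysis.Analysis"
begin

text \<open>Minkowski spacetime M^4 is modelled as real^4; coordinate 1 is time,
  coordinates 2,3,4 are space.\<close>

type_synonym pt = "real ^ 4"
type_synonym region = "pt set"

definition time :: "pt \<Rightarrow> real" where "time x = x $ 1"

definition space_norm :: "pt \<Rightarrow> real" where
  "space_norm x = sqrt ((x $ 2)\<^sup>2 + (x $ 3)\<^sup>2 + (x $ 4)\<^sup>2)"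

definition mink :: "pt \<Rightarrow> pt \<Rightarrow> real" where
  "mink x y = x $ 1 * y $ 1 - (x $ 2 * y $ 2 + x $ 3 * y $ 3 + x $ 4 * y $ 4)"

definition lorentz_up_plus :: "real ^ 4 ^ 4 \<Rightarrow> bool" where
  "lorentz_up_plus L \<longleftrightarrow> (\<forall>x y. mink (L *v x) (L *v y) = mink x y)
      \<and> det L = 1 \<and> L $ 1 $ 1 \<ge> 1"

definition poincare :: "((real ^ 4 ^ 4) \<times> pt) set" where
  "poincare = {(L, a). lorentz_up_plus L}"

definition pact :: "(real ^ 4 ^ 4) \<times> pt \<Rightarrow> pt \<Rightarrow> pt" where
  "pact s x = fst s *v x + snd s"

definition dcone :: "real \<Rightarrow> region" where
  "dcone R = {x. \<bar>time x\<bar> + space_norm x < R}"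

definition Kset :: "region set" where
  "Kset = {pact s ` dcone R | s R. s \<in> poincare \<and> R > 0}"

text \<open>Smooth (C-infinity) real functions on R^4: the largest class of everywhere
  differentiable functions closed under taking partial derivatives.\<close>

coinductive smooth :: "(pt \<Rightarrow> real) \<Rightarrow> bool" where
  "(\<forall>x. f differentiable (at x)) \<Longrightarrow>
   (\<forall>i::4. smooth (\<lambda>x. frechet_derivative f (at x) (axis i 1))) \<Longrightarrow> smooth f"

definition Dtest :: "region \<Rightarrow> (pt \<Rightarrow> real) set" where
  "Dtest a = {f. smooth f \<and> compact (closure {x. f x \<noteq> 0})
                 \<and> (\<forall>x. x \<notin> closure a \<longrightarrow> f x = 0)}"

text \<open>1-simplices: triples (|b|, d0 b, d1 b).\<close>

type_synonym simplex1 = "region \<times> region \<times> region"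

definition simplices1 :: "simplex1 set" where
  "simplices1 = {(c, d0, d1). c \<in> Kset \<and> d0 \<in> Kset \<and> d1 \<in> Kset \<and> d0 \<subseteq> c \<and> d1 \<subseteq> c}"

definition supp1 :: "simplex1 \<Rightarrow> region" where "supp1 b = fst b"
definition bd0 :: "simplex1 \<Rightarrow> region" where "bd0 b = fst (snd b)"
definition bd1 :: "simplex1 \<Rightarrow> region" where "bd1 b = snd (snd b)"

definition opp1 :: "simplex1 \<Rightarrow> simplex1" where
  "opp1 b = (supp1 b, bd1 b, bd0 b)"

definition act1 :: "(real ^ 4 ^ 4) \<times> pt \<Rightarrow> simplex1 \<Rightarrow> simplex1" where
  "act1 s b = (pact s ` supp1 b, pact s ` bd0 b, pact s ` bd1 b)"

definition C0 :: "(region \<Rightarrow> pt \<Rightarrow> real) set" where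
  "C0 = {f. \<forall>a\<in>Kset. f a \<in> Dtest a}"

definition C0_inv :: "(region \<Rightarrow> pt \<Rightarrow> real) set" where
  "C0_inv = {f \<in> C0. \<forall>s\<in>poincare. \<forall>a\<in>Kset. f (pact s ` a) \<circ> pact s = f a}"

definition C1 :: "(simplex1 \<Rightarrow> pt \<Rightarrow> real) set" where
  "C1 = {g. \<forall>b\<in>simplices1. g b \<in> Dtest (supp1 b)}"

definition C1_inv :: "(simplex1 \<Rightarrow> pt \<Rightarrow> real) set" where
  "C1_inv = {g \<in> C1. \<forall>s\<in>poincare. \<forall>b\<in>simplices1. g (act1 s b) \<circ> pact s = g b}"

definition delta0 :: "(region \<Rightarrow> pt \<Rightarrow> real) \<Rightarrow> simplex1 \<Rightarrow> pt \<Rightarrow> real" where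
  "delta0 f b = (\<lambda>x. f (bd0 b) x - f (bd1 b) x + f (supp1 b) x)"

definition ev1 :: "(simplex1 \<Rightarrow> pt \<Rightarrow> real) \<Rightarrow> simplex1 \<Rightarrow> pt \<Rightarrow> real" where
  "ev1 g b = (\<lambda>x. (g b x + g (opp1 b) x) / 2)"

definition odd1 :: "(simplex1 \<Rightarrow> pt \<Rightarrow> real) \<Rightarrow> simplex1 \<Rightarrow> pt \<Rightarrow> real" where
  "odd1 g b = (\<lambda>x. (g b x - g (opp1 b) x) / 2)"

end

theory Submission
  imports Defs "HOL-Computational_Algebra.Polynomial"
begin

text \<open>Every double cone is the open causal diamond between two vertices \<open>p\<close>, \<open>q\<close> with \<open>q - p\<close>
  future timelike, and the diamond determines its vertices. On the diamond between \<open>p\<close> and \<open>q\<close>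
  put the product of \<open>\<psi>\<close> applied to the four Minkowski products \<open>(x-p)\<^sup>2\<close>, \<open>(q-x)\<^sup>2\<close>,
  \<open>(x-p)\<cdot>(q-p)\<close>, \<open>(q-x)\<cdot>(q-p)\<close>, where \<open>\<psi>(t) = exp(-1/t)\<close> for \<open>t > 0\<close> and \<open>\<psi>(t) = 0\<close> otherwise.
  This is a smooth non-negative function whose non-vanishing set is exactly the diamond, and it is
  Poincar\'e invariant because it only involves Minkowski products of differences of points.
  Since distinct double cones then have bump functions with distinct supports, the odd part of
  the coboundary does not vanish when \<open>\<partial>\<^sub>0b \<noteq> \<partial>\<^sub>1b\<close>.\<close>

section \<open>The flat function and its derivatives\<close>

fun flat_poly :: "nat \<Rightarrow> real poly" where
  "flat_poly 0 = 1"
| "flat_poly (Suc k) = [:0, 0, 1:] * (flat_poly k - pderiv (flat_poly k))"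

text \<open>\<open>flat k\<close> is the \<open>k\<close>-th derivative of \<open>\<psi>\<close>: on \<open>t > 0\<close> it is \<open>P\<^sub>k(1/t) exp(-1/t)\<close>.\<close>

definition flat :: "nat \<Rightarrow> real \<Rightarrow> real" where
  "flat k t = (if t > 0 then poly (flat_poly k) (inverse t) * exp (- inverse t) else 0)"

lemma flat_0_nonneg: "flat 0 t \<ge> 0"
  by (simp add: flat_def)

lemma flat_0_neq_0_iff: "flat 0 t \<noteq> 0 \<longleftrightarrow> t > 0"
  by (simp add: flat_def)

lemma has_real_derivative_poly_inverse_exp:
  assumes "t > 0"
  shows "((\<lambda>t. poly (flat_poly k) (inverse t) * exp (- inverse t)) has_real_derivative
          poly (flat_poly (Suc k)) (inverse t) * exp (- inverse t)) (at t)"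
proof -
  have inv: "(inverse has_real_derivative - inverse (t\<^sup>2)) (at t)"
    using assms by (auto intro!: derivative_eq_intros simp: power2_eq_square)
  have P: "((\<lambda>t. poly (flat_poly k) (inverse t)) has_real_derivative
            poly (pderiv (flat_poly k)) (inverse t) * - inverse (t\<^sup>2)) (at t)"
    by (rule DERIV_chain2[OF poly_DERIV inv])
  have E: "((\<lambda>t. exp (- inverse t)) has_real_derivative exp (- inverse t) * inverse (t\<^sup>2)) (at t)"
    using DERIV_chain2[OF DERIV_exp DERIV_minus[OF inv]] by simp
  show ?thesis
    using DERIV_mult[OF P E] by (simp add: algebra_simps power2_eq_square)
qed

lemma poly_times_power_div_exp_tendsto_0:
  "((\<lambda>s. poly p s * s ^ n / exp s) \<longlongrightarrow> (0::real)) at_top"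
proof (induction p arbitrary: n rule: pCons_induct)
  case 0
  then show ?case by simp
next
  case (pCons a p)
  have "(\<lambda>s. poly (pCons a p) s * s ^ n / exp s) = (\<lambda>s. a * (s ^ n / exp s) + poly p s * s ^ Suc n / exp s)"
    by (auto simp: algebra_simps add_divide_distrib)
  then show ?case
    using tendsto_add[OF tendsto_mult[OF tendsto_const tendsto_power_div_exp_0] pCons.IH[of "Suc n"]]
    by simp
qed

lemma flat_has_real_derivative_0: "(flat k has_real_derivative 0) (at 0)"
proof -
  have "((\<lambda>s. poly (flat_poly k) s * s ^ 1 / exp s) \<longlongrightarrow> (0::real)) at_top"
    by (rule poly_times_power_div_exp_tendsto_0)
  then have "((\<lambda>y. poly (flat_poly k) (inverse y) * inverse y ^ 1 / exp (inverse y)) \<longlongrightarrow> (0::real)) (at_right 0)"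
    using filterlim_compose[OF _ filterlim_inverse_at_top_right] by (simp add: o_def)
  then have right: "((\<lambda>y. (flat k y - flat k 0) / (y - 0)) \<longlongrightarrow> 0) (at_right 0)"
    by (rule Lim_transform_eventually)
      (use eventually_at_right_less[of "0::real"] in \<open>eventually_elim, auto simp: flat_def exp_minus field_simps\<close>)
  have "eventually (\<lambda>y. 0 = (flat k y - flat k 0) / (y - 0)) (at_left (0::real))"
    by (simp add: eventually_at_filter flat_def)
  then have left: "((\<lambda>y. (flat k y - flat k 0) / (y - 0)) \<longlongrightarrow> 0) (at_left 0)"
    by (rule Lim_transform_eventually[OF tendsto_const])
  show ?thesis
    unfolding has_field_derivative_iff using right left filterlim_at_split by blast
qed

lemma flat_has_real_derivative: "(flat k has_real_derivative flat (Suc k) t) (at t)"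
proof -
  consider "t > 0" | "t < 0" | "t = 0" by linarith
  then show ?thesis
  proof cases
    case 1
    have "((\<lambda>t. poly (flat_poly k) (inverse t) * exp (- inverse t)) has_real_derivative flat (Suc k) t) (at t)"
      using has_real_derivative_poly_inverse_exp[OF 1, of k] 1 by (simp add: flat_def)
    then show ?thesis
      by (rule has_field_derivative_transform_within_open[where S="{0<..}"]) (use 1 in \<open>auto simp: flat_def\<close>)
  next
    case 2
    have "((\<lambda>_. 0) has_real_derivative flat (Suc k) t) (at t)"
      using 2 by (simp add: flat_def)
    then show ?thesis
      by (rule has_field_derivative_transform_within_open[where S="{..<0}"]) (use 2 in \<open>auto simp: flat_def\<close>)
  next
    case 3
    then show ?thesis
      using flat_has_real_derivative_0 by (simp add: flat_def)
  qed
qed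

inductive flat_algebra :: "(pt \<Rightarrow> real) \<Rightarrow> bool" where
  const: "flat_algebra (\<lambda>x. c)"
| coord: "flat_algebra (\<lambda>x. x $ j)"
| add: "flat_algebra f \<Longrightarrow> flat_algebra g \<Longrightarrow> flat_algebra (\<lambda>x. f x + g x)"
| mult: "flat_algebra f \<Longrightarrow> flat_algebra g \<Longrightarrow> flat_algebra (\<lambda>x. f x * g x)"
| flat_comp: "flat_algebra f \<Longrightarrow> flat_algebra (\<lambda>x. flat k (f x))"

lemma flat_algebra_has_derivative:
  assumes "flat_algebra f"
  shows "\<exists>F. (\<forall>x. (f has_derivative F x) (at x)) \<and> (\<forall>i. flat_algebra (\<lambda>x. F x (axis i 1)))"
  using assms
proof (induction rule: flat_algebra.induct)
  case (const c)
  show ?case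
    by (rule exI[of _ "\<lambda>x h. 0"]) (auto intro: flat_algebra.intros)
next
  case (coord j)
  show ?case
    by (rule exI[of _ "\<lambda>x h. h $ j"]) (auto intro: flat_algebra.intros bounded_linear_imp_has_derivative)
next
  case (add f g)
  then obtain F G where "\<forall>x. (f has_derivative F x) (at x)" "\<forall>i. flat_algebra (\<lambda>x. F x (axis i 1))"
    and "\<forall>x. (g has_derivative G x) (at x)" "\<forall>i. flat_algebra (\<lambda>x. G x (axis i 1))"
    by blast
  then show ?case
    by (intro exI[of _ "\<lambda>x h. F x h + G x h"]) (auto intro!: flat_algebra.intros has_derivative_add)
next
  case (mult f g)
  then obtain F G where "\<forall>x. (f has_derivative F x) (at x)" "\<forall>i. flat_algebra (\<lambda>x. F x (axis i 1))"
    and "\<forall>x. (g has_derivative G x) (at x)" "\<forall>i. flat_algebra (\<lambda>x. G x (axis i 1))"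
    by blast
  then show ?case
    using mult.hyps
    by (intro exI[of _ "\<lambda>x h. f x * G x h + F x h * g x"]) (auto intro!: flat_algebra.intros has_derivative_mult)
next
  case (flat_comp f k)
  then obtain F where F: "\<forall>x. (f has_derivative F x) (at x)" "\<forall>i. flat_algebra (\<lambda>x. F x (axis i 1))"
    by blast
  have "((\<lambda>x. flat k (f x)) has_derivative (\<lambda>h. flat (Suc k) (f x) * F x h)) (at x)" for x
    using has_derivative_compose[OF F(1)[rule_format]
        has_field_derivative_imp_has_derivative[OF flat_has_real_derivative]]
    by simp
  then show ?case
    using F flat_comp.hyps
    by (intro exI[of _ "\<lambda>x h. flat (Suc k) (f x) * F x h"]) (auto intro!: flat_algebra.intros)
qed

lemma flat_algebra_smooth: "flat_algebra f \<Longrightarrow> smooth f"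
proof (coinduction arbitrary: f rule: smooth.coinduct)
  case (smooth f)
  then obtain F where F: "\<forall>x. (f has_derivative F x) (at x)" "\<forall>i. flat_algebra (\<lambda>x. F x (axis i 1))"
    using flat_algebra_has_derivative by blast
  then have "(\<lambda>x. frechet_derivative f (at x) (axis i 1)) = (\<lambda>x. F x (axis i 1))" for i
    by (metis frechet_derivative_at)
  then show ?case
    using F by (auto simp: differentiable_def)
qed

lemma flat_algebra_diff: "flat_algebra f \<Longrightarrow> flat_algebra g \<Longrightarrow> flat_algebra (\<lambda>x. f x - g x)"
  using flat_algebra.add[OF _ flat_algebra.mult[OF flat_algebra.const, of g "-1"]] by simp

lemma flat_algebra_component: "flat_algebra (\<lambda>x. (x - p) $ i)" "flat_algebra (\<lambda>x. (p - x) $ i)"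
  by (auto intro!: flat_algebra_diff flat_algebra.const flat_algebra.coord)

lemma flat_algebra_mink:
  assumes "\<And>i. flat_algebra (\<lambda>x. f x $ i)" "\<And>i. flat_algebra (\<lambda>x. g x $ i)"
  shows "flat_algebra (\<lambda>x. mink (f x) (g x))"
  unfolding mink_def by (intro flat_algebra_diff flat_algebra.add flat_algebra.mult assms)

lemma flat_algebra_Dtest:
  assumes "flat_algebra f" "bounded a" "{x. f x \<noteq> 0} \<subseteq> a"
  shows "f \<in> Dtest a"
proof -
  have "bounded {x. f x \<noteq> 0}"
    using assms(2,3) bounded_subset by blast
  moreover have "\<forall>x. x \<notin> closure a \<longrightarrow> f x = 0"
    using assms(3) closure_subset by blast
  ultimately show ?thesis
    unfolding Dtest_def using assms(1) flat_algebra_smooth by (simp add: compact_closure)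
qed

section \<open>Causal vectors\<close>

definition future_timelike :: "pt \<Rightarrow> bool" where
  "future_timelike v \<longleftrightarrow> mink v v > 0 \<and> v $ 1 > 0"

definition future_causal :: "pt \<Rightarrow> bool" where
  "future_causal v \<longleftrightarrow> mink v v \<ge> 0 \<and> v $ 1 \<ge> 0"

lemma mink_commute: "mink u v = mink v u"
  by (simp add: mink_def algebra_simps)

lemma mink_scaleR_left: "mink (c *\<^sub>R u) v = c * mink u v"
  and mink_scaleR_right: "mink u (c *\<^sub>R v) = c * mink u v"
  and mink_add_left: "mink (u + w) v = mink u v + mink w v"
  and mink_add_right: "mink u (v + w) = mink u v + mink u w"
  by (simp_all add: mink_def algebra_simps)

lemma spatial_cauchy_schwarz:
  "(a2 * b2 + a3 * b3 + a4 * b4)\<^sup>2 \<le> (a2\<^sup>2 + a3\<^sup>2 + a4\<^sup>2) * (b2\<^sup>2 + b3\<^sup>2 + b4\<^sup>2 :: real)"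
proof -
  have "(a2\<^sup>2 + a3\<^sup>2 + a4\<^sup>2) * (b2\<^sup>2 + b3\<^sup>2 + b4\<^sup>2) - (a2 * b2 + a3 * b3 + a4 * b4)\<^sup>2
      = (a2 * b3 - a3 * b2)\<^sup>2 + (a2 * b4 - a4 * b2)\<^sup>2 + (a3 * b4 - a4 * b3)\<^sup>2"
    by (simp add: power2_eq_square algebra_simps)
  then show ?thesis
    by (smt (verit) zero_le_power2)
qed

lemma time_nonneg_if_mink_nonneg:
  assumes "mink u u \<ge> 0" "future_timelike w" "mink u w \<ge> 0"
  shows "u $ 1 \<ge> 0"
proof (rule ccontr)
  assume neg: "\<not> u $ 1 \<ge> 0"
  define S where "S = u$2 * w$2 + u$3 * w$3 + u$4 * w$4"
  define U where "U = (u$2)\<^sup>2 + (u$3)\<^sup>2 + (u$4)\<^sup>2"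
  define W where "W = (w$2)\<^sup>2 + (w$3)\<^sup>2 + (w$4)\<^sup>2"
  have U: "0 \<le> U" "U \<le> (u$1)\<^sup>2" and W: "W < (w$1)\<^sup>2"
    using assms(1,2) by (auto simp: U_def W_def mink_def future_timelike_def power2_eq_square)
  have "S\<^sup>2 \<le> U * W"
    unfolding S_def U_def W_def by (rule spatial_cauchy_schwarz)
  also have "\<dots> \<le> (u$1)\<^sup>2 * W"
    using U W_def by (simp add: mult_right_mono)
  also have "\<dots> < (u$1)\<^sup>2 * (w$1)\<^sup>2"
    using W neg by simp
  finally have "\<bar>S\<bar> < \<bar>u$1 * w$1\<bar>"
    by (simp add: power_mult_distrib power2_less_imp_less abs_le_square_iff[symmetric])
  moreover have "u$1 * w$1 < 0"
    using neg assms(2) by (simp add: future_timelike_def mult_neg_pos)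
  ultimately show False
    using assms(3) by (simp add: mink_def S_def)
qed

lemma future_causal_antisym:
  assumes "future_causal u" "future_causal (- u)"
  shows "u = 0"
proof -
  have "u$1 = 0"
    using assms by (simp add: future_causal_def)
  then have "(u$2)\<^sup>2 + (u$3)\<^sup>2 + (u$4)\<^sup>2 \<le> 0"
    using assms(1) by (simp add: future_causal_def mink_def power2_eq_square)
  then have "(u$2)\<^sup>2 = 0" "(u$3)\<^sup>2 = 0" "(u$4)\<^sup>2 = 0"
    using zero_le_power2[of "u$2"] zero_le_power2[of "u$3"] zero_le_power2[of "u$4"] by linarith+
  with \<open>u$1 = 0\<close> show ?thesis
    by (simp add: vec_eq_iff forall_4)
qed

lemma nonneg_if_quadratic_pos_near_0:
  fixes A B C :: real
  assumes "\<And>e. 0 < e \<Longrightarrow> e < 1 \<Longrightarrow> A + e * B + e\<^sup>2 * C > 0"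
  shows "A \<ge> 0"
proof -
  have "eventually (\<lambda>e. e \<in> {0<..<1::real}) (at_right 0)"
    by (rule eventually_at_right_real) simp
  then have pos: "eventually (\<lambda>e. 0 \<le> A + e * B + e\<^sup>2 * C) (at_right 0)"
    by eventually_elim (use assms in \<open>auto intro: less_imp_le\<close>)
  have "((\<lambda>e. A + e * B + e\<^sup>2 * C) \<longlongrightarrow> A + 0 * B + 0\<^sup>2 * C) (at_right 0)"
    by (intro tendsto_intros)
  from tendsto_lowerbound[OF this pos] show ?thesis
    by simp
qed

lemma future_causal_if_future_along_segment:
  assumes "\<And>e. 0 < e \<Longrightarrow> e < 1 \<Longrightarrow> mink (u + e *\<^sub>R w) (u + e *\<^sub>R w) > 0 \<and> mink (u + e *\<^sub>R w) w' > 0"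
    and "future_timelike w'"
  shows "future_causal u"
proof -
  have "mink u u \<ge> 0"
    using assms(1)
    by (intro nonneg_if_quadratic_pos_near_0[of _ "2 * mink u w" "mink w w"])
      (simp add: mink_add_left mink_add_right mink_scaleR_left mink_scaleR_right mink_commute[of w u]
        power2_eq_square algebra_simps)
  moreover have "mink u w' \<ge> 0"
    using assms(1)
    by (intro nonneg_if_quadratic_pos_near_0[of _ "mink w w'" 0]) (simp add: mink_add_left mink_scaleR_left)
  ultimately show ?thesis
    using time_nonneg_if_mink_nonneg assms(2) by (simp add: future_causal_def)
qed

section \<open>Causal diamonds and their vertices\<close>

text \<open>For \<open>q - p\<close> future timelike the last two conditions select the future cone of \<open>p\<close> and
  the past cone of \<open>q\<close>.\<close>

definition diamond :: "pt \<Rightarrow> pt \<Rightarrow> region" where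
  "diamond p q = {x. mink (x - p) (x - p) > 0 \<and> mink (q - x) (q - x) > 0
                     \<and> mink (x - p) (q - p) > 0 \<and> mink (q - x) (q - p) > 0}"

lemma segment_in_diamond:
  assumes "future_timelike (q - p)" "0 < e" "e < 1"
  shows "p + e *\<^sub>R (q - p) \<in> diamond p q"
proof -
  have "p + e *\<^sub>R (q - p) - p = e *\<^sub>R (q - p)" "q - (p + e *\<^sub>R (q - p)) = (1 - e) *\<^sub>R (q - p)"
    by (simp_all add: algebra_simps)
  then show ?thesis
    using assms by (simp add: diamond_def future_timelike_def mink_scaleR_left mink_scaleR_right)
qed

text \<open>Approach the vertices of the smaller diamond along its axis \<open>p + e (q - p)\<close>.\<close>

lemma diamond_subset_imp_future_causal:
  assumes "future_timelike (q - p)" "future_timelike (q' - p')" "diamond p q \<subseteq> diamond p' q'"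
  shows "future_causal (p - p')" "future_causal (q' - q)"
proof -
  show "future_causal (p - p')"
  proof (rule future_causal_if_future_along_segment[OF _ assms(2), where w="q - p"])
    fix e :: real
    assume "0 < e" "e < 1"
    then have "p + e *\<^sub>R (q - p) \<in> diamond p' q'"
      using segment_in_diamond[OF assms(1)] assms(3) by blast
    moreover have "p + e *\<^sub>R (q - p) - p' = (p - p') + e *\<^sub>R (q - p)"
      by simp
    ultimately show "mink ((p - p') + e *\<^sub>R (q - p)) ((p - p') + e *\<^sub>R (q - p)) > 0
        \<and> mink ((p - p') + e *\<^sub>R (q - p)) (q' - p') > 0"
      by (simp add: diamond_def)
  qed
  show "future_causal (q' - q)"
  proof (rule future_causal_if_future_along_segment[OF _ assms(2), where w="q - p"])
    fix e :: real
    assume "0 < e" "e < 1"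
    then have "p + (1 - e) *\<^sub>R (q - p) \<in> diamond p' q'"
      using segment_in_diamond[OF assms(1), of "1 - e"] assms(3) by auto
    moreover have "q' - (p + (1 - e) *\<^sub>R (q - p)) = (q' - q) + e *\<^sub>R (q - p)"
      by (simp add: algebra_simps)
    ultimately show "mink ((q' - q) + e *\<^sub>R (q - p)) ((q' - q) + e *\<^sub>R (q - p)) > 0
        \<and> mink ((q' - q) + e *\<^sub>R (q - p)) (q' - p') > 0"
      by (simp add: diamond_def)
  qed
qed

lemma diamond_eq_imp_vertices_eq:
  assumes "future_timelike (q - p)" "future_timelike (q' - p')" "diamond p q = diamond p' q'"
  shows "p = p'" "q = q'"
proof -
  have "future_causal (p - p')" "future_causal (p' - p)" "future_causal (q' - q)" "future_causal (q - q')"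
    using diamond_subset_imp_future_causal[OF assms(1,2)] diamond_subset_imp_future_causal[OF assms(2,1)]
      assms(3) by auto
  then show "p = p'" "q = q'"
    using future_causal_antisym[of "p - p'"] future_causal_antisym[of "q' - q"] by simp_all
qed

definition vertices :: "region \<Rightarrow> pt \<times> pt" where
  "vertices a = (SOME (p, q). future_timelike (q - p) \<and> a = diamond p q)"

lemma vertices_diamond:
  assumes "future_timelike (q - p)"
  shows "vertices (diamond p q) = (p, q)"
proof -
  have "\<exists>pq. case pq of (p', q') \<Rightarrow> future_timelike (q' - p') \<and> diamond p q = diamond p' q'"
    using assms by blast
  then have "case vertices (diamond p q) of (p', q') \<Rightarrow> future_timelike (q' - p') \<and> diamond p q = diamond p' q'"
    unfolding vertices_def by (rule someI_ex)
  then show ?thesis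
    using diamond_eq_imp_vertices_eq[OF assms] by (auto split: prod.splits)
qed

lemma pact_diff: "pact s x - pact s y = fst s *v (x - y)"
  by (simp add: pact_def matrix_vector_mult_diff_distrib)

lemma mink_poincare: "s \<in> poincare \<Longrightarrow> mink (fst s *v u) (fst s *v v) = mink u v"
  by (auto simp: poincare_def lorentz_up_plus_def)

lemma surj_pact:
  assumes "s \<in> poincare"
  shows "surj (pact s)"
proof -
  obtain L a where s: "s = (L, a)"
    by (cases s)
  then have "invertible L"
    using assms by (simp add: poincare_def lorentz_up_plus_def invertible_det_nz)
  then obtain B where B: "L ** B = mat 1"
    by (auto simp: invertible_def)
  have "pact s (B *v (y - a)) = y" for y
    by (simp add: s pact_def matrix_vector_mul_assoc B)
  then show ?thesis
    unfolding surj_def by metis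
qed

lemma pact_diamond:
  assumes "s \<in> poincare"
  shows "pact s ` diamond p q = diamond (pact s p) (pact s q)"
proof -
  have mem: "pact s x \<in> diamond (pact s p) (pact s q) \<longleftrightarrow> x \<in> diamond p q" for x
    by (simp add: diamond_def pact_diff mink_poincare[OF assms])
  show ?thesis
  proof (intro subset_antisym subsetI)
    fix y
    assume "y \<in> diamond (pact s p) (pact s q)"
    moreover obtain x where "y = pact s x"
      using surj_pact[OF assms] by (metis surj_def)
    ultimately show "y \<in> pact s ` diamond p q"
      using mem by blast
  qed (use mem in blast)
qed

lemma future_timelike_poincare:
  assumes "s \<in> poincare" "future_timelike v"
  shows "future_timelike (fst s *v v)"
proof -
  \<comment> \<open>\<open>L\<^sub>1\<^sub>1 \<ge> 1\<close> makes \<open>L e\<^sub>1\<close> future timelike, which fixes the time orientation of \<open>L v\<close>.\<close>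
  define e1 :: pt where "e1 = axis 1 1"
  have mink_e1: "mink v e1 = v $ 1" "mink e1 e1 = 1" for v
    by (simp_all add: mink_def e1_def axis_def)
  have "(fst s *v e1) $ 1 = fst s $ 1 $ 1"
    by (simp add: matrix_vector_mult_def e1_def axis_def sum_4)
  then have "future_timelike (fst s *v e1)"
    using assms(1) mink_poincare[OF assms(1)] mink_e1
    by (auto simp: future_timelike_def poincare_def lorentz_up_plus_def)
  moreover have Lv: "mink (fst s *v v) (fst s *v v) > 0" "mink (fst s *v v) (fst s *v e1) > 0"
    using assms by (simp_all add: mink_poincare mink_e1 future_timelike_def)
  ultimately have "(fst s *v v) $ 1 \<ge> 0"
    using time_nonneg_if_mink_nonneg by (simp add: less_imp_le)
  moreover have "(fst s *v v) $ 1 \<noteq> 0"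
    using Lv(1) by (auto simp: mink_def) (smt (verit) zero_le_square)
  ultimately show ?thesis
    using Lv(1) by (simp add: future_timelike_def)
qed

lemma abs_add_sqrt_less_iff:
  fixes t Y R :: real
  assumes "Y \<ge> 0"
  shows "\<bar>t\<bar> + sqrt Y < R \<longleftrightarrow> (t + R)\<^sup>2 > Y \<and> (R - t)\<^sup>2 > Y \<and> t + R > 0 \<and> R - t > 0"
proof
  assume lhs: "\<bar>t\<bar> + sqrt Y < R"
  have "Y = (sqrt Y)\<^sup>2"
    using assms by simp
  also have "\<dots> < (R - \<bar>t\<bar>)\<^sup>2"
    using lhs assms by (intro power_strict_mono) auto
  finally have "Y < (R - \<bar>t\<bar>)\<^sup>2" .
  moreover have "(R - \<bar>t\<bar>)\<^sup>2 \<le> (t + R)\<^sup>2" "(R - \<bar>t\<bar>)\<^sup>2 \<le> (R - t)\<^sup>2"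
    using lhs by (intro power_mono; smt (verit) real_sqrt_ge_zero assms)+
  ultimately show "(t + R)\<^sup>2 > Y \<and> (R - t)\<^sup>2 > Y \<and> t + R > 0 \<and> R - t > 0"
    using lhs real_sqrt_ge_zero[OF assms] abs_ge_self[of t] abs_ge_minus_self[of t]
    by (intro conjI; linarith)
next
  assume "(t + R)\<^sup>2 > Y \<and> (R - t)\<^sup>2 > Y \<and> t + R > 0 \<and> R - t > 0"
  then have "sqrt Y < t + R" "sqrt Y < R - t"
    using real_sqrt_less_mono by (metis real_sqrt_abs abs_of_pos)+
  then show "\<bar>t\<bar> + sqrt Y < R"
    by (auto simp: abs_if)
qed

lemma dcone_eq_diamond:
  assumes "R > 0"
  shows "dcone R = diamond (- (R *\<^sub>R axis 1 1)) (R *\<^sub>R axis 1 1)"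
proof -
  have "\<bar>time x\<bar> + space_norm x < R \<longleftrightarrow> x \<in> diamond (- (R *\<^sub>R axis 1 1)) (R *\<^sub>R axis 1 1)" for x :: pt
  proof -
    have Y: "(x$2)\<^sup>2 + (x$3)\<^sup>2 + (x$4)\<^sup>2 \<ge> 0"
      by simp
    have "R * (R * 2) + R * (x$1 * 2) = (2 * R) * (R + x$1)"
      by (simp add: algebra_simps)
    then have "0 < R * (R * 2) + R * (x$1 * 2) \<longleftrightarrow> 0 < R + x$1"
      using assms by (simp add: zero_less_mult_iff)
    then show ?thesis
      unfolding time_def space_norm_def abs_add_sqrt_less_iff[OF Y] diamond_def
        mem_Collect_eq mink_def
      using assms by (simp add: axis_def power2_eq_square algebra_simps)
  qed
  then show ?thesis
    by (auto simp: dcone_def)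
qed

lemma Kset_diamond:
  assumes "a \<in> Kset"
  obtains p q where "future_timelike (q - p)" "a = diamond p q"
proof -
  obtain s R where sR: "a = pact s ` dcone R" "s \<in> poincare" "R > 0"
    using assms by (auto simp: Kset_def)
  define p where "p = pact s (- (R *\<^sub>R axis 1 1))"
  define q where "q = pact s (R *\<^sub>R axis 1 1)"
  have "future_timelike (R *\<^sub>R axis 1 1 - - (R *\<^sub>R axis 1 1))"
    using sR(3) by (simp add: future_timelike_def mink_def axis_def)
  then have "future_timelike (q - p)"
    unfolding p_def q_def pact_diff by (rule future_timelike_poincare[OF sR(2)])
  moreover have "a = diamond p q"
    using sR by (simp add: p_def q_def dcone_eq_diamond pact_diamond)
  ultimately show thesis
    by (rule that)
qed

lemma bounded_dcone: "bounded (dcone R)"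
proof -
  have "norm x \<le> 4 * R" if x: "x \<in> dcone R" for x
  proof -
    have "\<bar>x$2\<bar> \<le> space_norm x" "\<bar>x$3\<bar> \<le> space_norm x" "\<bar>x$4\<bar> \<le> space_norm x" "space_norm x \<ge> 0"
      unfolding space_norm_def by (auto intro!: real_le_rsqrt simp: power2_eq_square)
    then have "\<bar>x$i\<bar> \<le> R" for i
      using x exhaust_4[of i] by (auto simp: dcone_def time_def)
    then have "(\<Sum>i\<in>UNIV. \<bar>x$i\<bar>) \<le> (\<Sum>i\<in>(UNIV::4 set). R)"
      by (intro sum_mono)
    then show ?thesis
      using norm_le_l1_cart[of x] by simp
  qed
  then show ?thesis
    unfolding bounded_iff by blast
qed

lemma Kset_bounded:
  assumes "a \<in> Kset"
  shows "bounded a"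
proof -
  obtain s R where sR: "a = pact s ` dcone R"
    using assms by (auto simp: Kset_def)
  have "bounded ((\<lambda>x. snd s + x) ` ((\<lambda>x. fst s *v x) ` dcone R))"
    using bounded_dcone by (intro bounded_translation bounded_linear_image) (simp_all add: linear_linear[symmetric])
  moreover have "pact s ` dcone R = (\<lambda>x. snd s + x) ` ((\<lambda>x. fst s *v x) ` dcone R)"
    by (auto simp: pact_def image_image add.commute)
  ultimately show ?thesis
    using sR by simp
qed

section \<open>The invariant bump functions\<close>

definition diamond_bump :: "pt \<Rightarrow> pt \<Rightarrow> pt \<Rightarrow> real" where
  "diamond_bump p q x = flat 0 (mink (x - p) (x - p)) * flat 0 (mink (q - x) (q - x))
                        * flat 0 (mink (x - p) (q - p)) * flat 0 (mink (q - x) (q - p))"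

definition cone_bump :: "region \<Rightarrow> pt \<Rightarrow> real" where
  "cone_bump a = case_prod diamond_bump (vertices a)"

lemma diamond_bump_neq_0_iff: "diamond_bump p q x \<noteq> 0 \<longleftrightarrow> x \<in> diamond p q"
  by (simp add: diamond_bump_def flat_0_neq_0_iff diamond_def)

lemma diamond_bump_nonneg: "diamond_bump p q x \<ge> 0"
  by (simp add: diamond_bump_def flat_0_nonneg)

lemma flat_algebra_diamond_bump: "flat_algebra (diamond_bump p q)"
  unfolding diamond_bump_def[abs_def]
  by (intro flat_algebra.mult flat_algebra.flat_comp flat_algebra_mink flat_algebra_component flat_algebra.const)

lemma diamond_bump_pact:
  "s \<in> poincare \<Longrightarrow> diamond_bump (pact s p) (pact s q) (pact s x) = diamond_bump p q x"
  by (simp add: diamond_bump_def pact_diff mink_poincare)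

lemma cone_bump_diamond: "future_timelike (q - p) \<Longrightarrow> cone_bump (diamond p q) = diamond_bump p q"
  by (simp add: cone_bump_def vertices_diamond)

context
  fixes a :: region
  assumes a: "a \<in> Kset"
begin

lemma cone_bump_neq_0_iff: "cone_bump a x \<noteq> 0 \<longleftrightarrow> x \<in> a"
  using a by (elim Kset_diamond) (simp add: cone_bump_diamond diamond_bump_neq_0_iff)

lemma cone_bump_nonneg: "cone_bump a x \<ge> 0"
  using a by (elim Kset_diamond) (simp add: cone_bump_diamond diamond_bump_nonneg)

lemma flat_algebra_cone_bump: "flat_algebra (cone_bump a)"
  using a by (elim Kset_diamond) (simp add: cone_bump_diamond flat_algebra_diamond_bump)

lemma cone_bump_nonzero: "cone_bump a \<noteq> (\<lambda>x. 0)"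
proof -
  obtain p q where pq: "future_timelike (q - p)" "a = diamond p q"
    using a by (rule Kset_diamond)
  then have "p + (1/2) *\<^sub>R (q - p) \<in> a"
    using segment_in_diamond by simp
  then show ?thesis
    using cone_bump_neq_0_iff by fastforce
qed

lemma cone_bump_pact:
  assumes "s \<in> poincare"
  shows "cone_bump (pact s ` a) \<circ> pact s = cone_bump a"
proof -
  obtain p q where pq: "future_timelike (q - p)" "a = diamond p q"
    using a by (rule Kset_diamond)
  have "future_timelike (pact s q - pact s p)"
    unfolding pact_diff using future_timelike_poincare[OF assms pq(1)] .
  then show ?thesis
    using pq by (simp add: pact_diamond[OF assms] cone_bump_diamond diamond_bump_pact[OF assms] o_def)
qed

lemma cone_bump_Dtest: "cone_bump a \<in> Dtest a"
  using flat_algebra_cone_bump Kset_bounded[OF a] cone_bump_neq_0_iff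
  by (intro flat_algebra_Dtest) auto

end

lemma cone_bump_C0_inv: "cone_bump \<in> C0_inv"
  by (simp add: C0_inv_def C0_def cone_bump_Dtest cone_bump_pact)

section \<open>The coboundary of the bump cochain\<close>

lemma simplices1_Kset:
  assumes "b \<in> simplices1"
  shows "supp1 b \<in> Kset" "bd0 b \<in> Kset" "bd1 b \<in> Kset" "bd0 b \<subseteq> supp1 b" "bd1 b \<subseteq> supp1 b"
  using assms by (auto simp: simplices1_def supp1_def bd0_def bd1_def)

lemma ev1_delta0: "ev1 (delta0 f) b = f (supp1 b)"
  by (simp add: ev1_def delta0_def opp1_def supp1_def bd0_def bd1_def)

lemma odd1_delta0: "odd1 (delta0 f) b = (\<lambda>x. f (bd0 b) x - f (bd1 b) x)"
  by (simp add: odd1_def delta0_def opp1_def supp1_def bd0_def bd1_def fun_eq_iff)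

lemma delta0_act1:
  assumes "f \<in> C0_inv" "s \<in> poincare" "b \<in> simplices1"
  shows "delta0 f (act1 s b) \<circ> pact s = delta0 f b"
proof -
  have "f (pact s ` c) (pact s x) = f c x" if "c \<in> Kset" for c x
    using assms(1,2) that by (auto simp: C0_inv_def fun_eq_iff)
  then show ?thesis
    using simplices1_Kset[OF assms(3)]
    by (simp add: fun_eq_iff delta0_def act1_def supp1_def[of "(_, _, _)"] bd0_def[of "(_, _, _)"]
        bd1_def[of "(_, _, _)"])
qed

lemma delta0_cone_bump_Dtest:
  assumes "b \<in> simplices1"
  shows "delta0 cone_bump b \<in> Dtest (supp1 b)"
proof (rule flat_algebra_Dtest)
  note K = simplices1_Kset[OF assms]
  show "flat_algebra (delta0 cone_bump b)"
    unfolding delta0_def by (intro flat_algebra.add flat_algebra_diff flat_algebra_cone_bump K)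
  show "bounded (supp1 b)"
    using Kset_bounded K(1) .
  have "delta0 cone_bump b x = 0" if "x \<notin> supp1 b" for x
  proof -
    have "x \<notin> bd0 b" "x \<notin> bd1 b"
      using that K(4,5) by auto
    then have "cone_bump (supp1 b) x = 0" "cone_bump (bd0 b) x = 0" "cone_bump (bd1 b) x = 0"
      using that cone_bump_neq_0_iff[OF K(1)] cone_bump_neq_0_iff[OF K(2)] cone_bump_neq_0_iff[OF K(3)]
      by blast+
    then show ?thesis
      by (simp add: delta0_def)
  qed
  then show "{x. delta0 cone_bump b x \<noteq> 0} \<subseteq> supp1 b"
    by blast
qed

lemma delta0_cone_bump_C1_inv: "delta0 cone_bump \<in> C1_inv"
  by (simp add: C1_inv_def C1_def delta0_cone_bump_Dtest delta0_act1 cone_bump_C0_inv)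

lemma cone_bump_diff_nonzero:
  assumes "a \<in> Kset" "a' \<in> Kset" "a \<noteq> a'"
  shows "(\<lambda>x. cone_bump a x - cone_bump a' x) \<noteq> (\<lambda>x. 0)"
proof
  assume "(\<lambda>x. cone_bump a x - cone_bump a' x) = (\<lambda>x. 0)"
  then have "cone_bump a x \<noteq> 0 \<longleftrightarrow> cone_bump a' x \<noteq> 0" for x
    by (metis eq_iff_diff_eq_0)
  then show False
    using assms cone_bump_neq_0_iff by blast
qed

theorem proposition4p12:
  shows "\<exists>f \<in> C0_inv.
     (\<forall>a\<in>Kset. f a \<noteq> (\<lambda>x. 0) \<and> (\<forall>x. f a x \<ge> 0))
   \<and> delta0 f \<in> C1_inv
   \<and> (\<forall>b\<in>simplices1. ev1 (delta0 f) b = f (supp1 b)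
        \<and> f (supp1 b) \<noteq> (\<lambda>x. 0) \<and> (\<forall>x. f (supp1 b) x \<ge> 0))
   \<and> (\<forall>b\<in>simplices1. bd0 b \<noteq> bd1 b \<longrightarrow>
        odd1 (delta0 f) b = (\<lambda>x. f (bd0 b) x - f (bd1 b) x)
        \<and> (\<lambda>x. f (bd0 b) x - f (bd1 b) x) \<noteq> (\<lambda>x. 0))"
proof (intro bexI[OF _ cone_bump_C0_inv] conjI ballI impI)
  show "delta0 cone_bump \<in> C1_inv"
    by (rule delta0_cone_bump_C1_inv)
  fix b assume b: "b \<in> simplices1"
  show "ev1 (delta0 cone_bump) b = cone_bump (supp1 b)"
    "odd1 (delta0 cone_bump) b = (\<lambda>x. cone_bump (bd0 b) x - cone_bump (bd1 b) x)"
    by (rule ev1_delta0 odd1_delta0)+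
  show "cone_bump (supp1 b) \<noteq> (\<lambda>x. 0)" "\<forall>x. cone_bump (supp1 b) x \<ge> 0"
    using simplices1_Kset(1)[OF b] cone_bump_nonzero cone_bump_nonneg by auto
  assume "bd0 b \<noteq> bd1 b"
  then show "(\<lambda>x. cone_bump (bd0 b) x - cone_bump (bd1 b) x) \<noteq> (\<lambda>x. 0)"
    using simplices1_Kset[OF b] by (intro cone_bump_diff_nonzero)
qed (use cone_bump_nonzero cone_bump_nonneg in auto)

end
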